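(* One has $w(\bar\alpha_0)=\frac12$, and for all $n\ge1$: $$w(\bar\alpha_n)=-\frac{3}{2^{n+1}(2n-1)!!},\qquad w(\bar Z_{n+1})=-\frac1{2^{n-1}(2n+1)!!}.$$
   Context: $\mathcal A$ is the free associative $\mathbb R$-algebra of noncommutative polynomials in symbols $N$ (degree 1) and $\Delta$ (degree 2). Each $A\in\mathcal A$ homogeneous of degree $\ge1$ is uniquely written $A=\bar AN+\tilde A\Delta$. The weight $w:\mathcal A\to\mathbb R$ is the algebra homomorphism with $w(I)=1$, $w(N)=2$, $w(\Delta)=-1$. Define $R_{kj},S_{kj}$ ($k,j$ integers): $R_{00}=I$, $S_{00}=0$, $R_{kj}=S_{kj}=0$ if $k<0$ or $j<0$, otherwise $R_{kj}=-(N^2+\Delta)R_{k-1,j}+NS_{k-1,j}$, $S_{kj}=\Delta NR_{k-1,j}-\Delta S_{k-1,j}+NR_{k-1,j-1}$. Let $\{a,b\}=\frac{\Gamma(a+b+\frac12)}{(a+b)!\Gamma(a+\frac12)}$, $Z_{n+1}=\sum_{j=0}^n\{n+1,j-1\}R_{n+j,j}$ and $\alpha_n=\sum_{j=0}^{n+1}\{n,j\}S_{n+j,j}$. *)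

theory Defs
  imports "HOL-Analysis.Analysis"
begin

text \<open>Free associative R-algebra on N (degree 1) and Delta (degree 2): elements are
  real coefficient functions on words (finite support for all elements considered).\<close>

datatype letter = LN | LD

type_synonym ncpoly = "letter list \<Rightarrow> real"

definition pzero :: ncpoly where "pzero = (\<lambda>w. 0)"
definition pone :: ncpoly where "pone = (\<lambda>w. if w = [] then 1 else 0)"
definition pN :: ncpoly where "pN = (\<lambda>w. if w = [LN] then 1 else 0)"
definition pD :: ncpoly where "pD = (\<lambda>w. if w = [LD] then 1 else 0)"
definition padd :: "ncpoly \<Rightarrow> ncpoly \<Rightarrow> ncpoly" where "padd A B = (\<lambda>w. A w + B w)"
definition psub :: "ncpoly \<Rightarrow> ncpoly \<Rightarrow> ncpoly" where "psub A B = (\<lambda>w. A w - B w)"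
definition psmult :: "real \<Rightarrow> ncpoly \<Rightarrow> ncpoly" where "psmult c A = (\<lambda>w. c * A w)"
definition pmul :: "ncpoly \<Rightarrow> ncpoly \<Rightarrow> ncpoly" where
  "pmul A B = (\<lambda>w. \<Sum>i\<le>length w. A (take i w) * B (drop i w))"

definition weight_word :: "letter list \<Rightarrow> real" where
  "weight_word w = 2 ^ length (filter (\<lambda>x. x = LN) w) * (-1) ^ length (filter (\<lambda>x. x = LD) w)"
definition weight :: "ncpoly \<Rightarrow> real" where
  "weight A = (\<Sum>w\<in>{w. A w \<noteq> 0}. A w * weight_word w)"

text \<open>A = bar A * N + tilde A * Delta; bar A collects the words ending in N.\<close>
definition pbar :: "ncpoly \<Rightarrow> ncpoly" where "pbar A = (\<lambda>w. A (w @ [LN]))"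

fun RS :: "nat \<Rightarrow> int \<Rightarrow> ncpoly \<times> ncpoly" where
  "RS 0 j = ((if j = 0 then pone else pzero), pzero)"
| "RS (Suc k) j =
     (if j < 0 then (pzero, pzero) else
      (padd (psmult (-1) (pmul (padd (pmul pN pN) pD) (fst (RS k j)))) (pmul pN (snd (RS k j))),
       padd (psub (pmul (pmul pD pN) (fst (RS k j))) (pmul pD (snd (RS k j))))
            (pmul pN (fst (RS k (j - 1))))))"

definition R :: "int \<Rightarrow> int \<Rightarrow> ncpoly" where
  "R k j = (if k < 0 \<or> j < 0 then pzero else fst (RS (nat k) j))"
definition S :: "int \<Rightarrow> int \<Rightarrow> ncpoly" where
  "S k j = (if k < 0 \<or> j < 0 then pzero else snd (RS (nat k) j))"

definition brace :: "int \<Rightarrow> int \<Rightarrow> real" where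
  "brace a b = Gamma (of_int (a + b) + 1/2) / (fact (nat (a + b)) * Gamma (of_int a + 1/2))"

text \<open>Zp n = Z_{n+1}.\<close>
definition Zp :: "nat \<Rightarrow> ncpoly" where
  "Zp n = (\<lambda>w. \<Sum>j\<in>{0..n}. brace (int n + 1) (int j - 1) * R (int n + int j) (int j) w)"
definition alpha :: "nat \<Rightarrow> ncpoly" where
  "alpha n = (\<lambda>w. \<Sum>j\<in>{0..n+1}. brace (int n) (int j) * S (int n + int j) (int j) w)"

fun dfact :: "nat \<Rightarrow> nat" where
  "dfact 0 = 1" | "dfact (Suc 0) = 1" | "dfact (Suc (Suc n)) = Suc (Suc n) * dfact n"

end

theory Submission
  imports Defs "HOL-Computational_Algebra.Polynomial"
begin

text \<open>
  The weight is multiplicative, so \<open>A \<mapsto> w(bar A)\<close> is linear, and left multiplication by a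
  word \<open>u\<close> acts on it by \<open>w(bar (u A)) = w(u) w(bar A)\<close>, plus \<open>A(\<emptyset>) w(u')\<close> when \<open>u = u' N\<close>.
  Applied to the recursion defining \<open>R\<^sub>k\<^sub>j\<close> and \<open>S\<^sub>k\<^sub>j\<close>, this gives a linear recursion for
  \<open>w(bar R\<^sub>k\<^sub>j)\<close> and \<open>w(bar S\<^sub>k\<^sub>j)\<close>, solved by combinations of \<open>4\<^sup>i binom(k-1, 2i)\<close> and
  \<open>4\<^sup>i binom(k-1, 2i+1)\<close>. After clearing factorials, the \<open>j\<close>-th term of \<open>w(bar \<alpha>\<^sub>n)\<close>
  (resp. \<open>w(bar Z\<^sub>n\<^sub>+\<^sub>1)\<close>) is a constant times \<open>(-1)\<^sup>j binom(m, j) p(j) / (n + j)\<close>, where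
  \<open>m = n + 1\<close> (resp. \<open>m = n\<close>) and \<open>p\<close> is a polynomial of degree at most \<open>m\<close>. Since \<open>m\<close>-th
  differences annihilate polynomials of lower degree, partial fractions reduce the alternating
  sum to \<open>p(-n) m! / (n)\<^sub>m\<^sub>+\<^sub>1\<close>, and evaluating \<open>p(-n)\<close> produces the double factorials.
\<close>

section \<open>Left multiplication by words and the weight\<close>

definition pmono :: "letter list \<Rightarrow> ncpoly" where
  "pmono u = (\<lambda>w. if w = u then 1 else 0)"

definition lmul_word :: "letter list \<Rightarrow> ncpoly \<Rightarrow> ncpoly" where
  "lmul_word u A = (\<lambda>w. if take (length u) w = u then A (drop (length u) w) else 0)"

definition finite_support :: "ncpoly \<Rightarrow> bool" where
  "finite_support A \<longleftrightarrow> finite {w. A w \<noteq> 0}"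

lemma pmul_pmono: "pmul (pmono u) A = lmul_word u A"
proof
  fix w
  have "pmul (pmono u) A w = (\<Sum>i\<le>length w. if i = length u then lmul_word u A w else 0)"
    unfolding pmul_def pmono_def lmul_word_def
    by (rule sum.cong) (auto simp: min_def split: if_splits)
  also have "\<dots> = lmul_word u A w"
    unfolding lmul_word_def by (auto simp: min_def dest: arg_cong[of _ _ length])
  finally show "pmul (pmono u) A w = lmul_word u A w" .
qed

lemma pN_eq_pmono: "pN = pmono [LN]" and pD_eq_pmono: "pD = pmono [LD]"
  and pmono_Nil_eq_pone: "pmono [] = pone"
  by (auto simp: pN_def pD_def pone_def pmono_def)

lemma lmul_word_pmono: "lmul_word u (pmono v) = pmono (u @ v)"
  unfolding lmul_word_def pmono_def
  by (rule ext) (auto dest: arg_cong[of _ _ length], metis append_take_drop_id)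

lemma pmul_padd_left: "pmul (padd A B) C = padd (pmul A C) (pmul B C)"
  unfolding pmul_def padd_def by (rule ext) (simp add: algebra_simps sum.distrib)

lemma finite_support_pmono: "finite_support (pmono u)"
  unfolding finite_support_def pmono_def by (rule finite_subset[of _ "{u}"]) auto

lemma finite_support_pzero: "finite_support pzero"
  unfolding finite_support_def pzero_def by simp

lemma finite_support_padd: "finite_support A \<Longrightarrow> finite_support B \<Longrightarrow> finite_support (padd A B)"
  unfolding finite_support_def padd_def
  by (rule finite_subset[of _ "{w. A w \<noteq> 0} \<union> {w. B w \<noteq> 0}"]) auto

lemma finite_support_psub: "finite_support A \<Longrightarrow> finite_support B \<Longrightarrow> finite_support (psub A B)"
  unfolding finite_support_def psub_def
  by (rule finite_subset[of _ "{w. A w \<noteq> 0} \<union> {w. B w \<noteq> 0}"]) auto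

lemma finite_support_psmult: "finite_support A \<Longrightarrow> finite_support (psmult c A)"
  unfolding finite_support_def psmult_def by (rule finite_subset[of _ "{w. A w \<noteq> 0}"]) auto

lemma support_lmul_word: "{w. lmul_word u A w \<noteq> 0} = (\<lambda>v. u @ v) ` {w. A w \<noteq> 0}"
  unfolding lmul_word_def by (auto simp: image_iff) (metis append_take_drop_id)

lemma finite_support_lmul_word: "finite_support A \<Longrightarrow> finite_support (lmul_word u A)"
  unfolding finite_support_def support_lmul_word by simp

lemma finite_support_pbar: "finite_support A \<Longrightarrow> finite_support (pbar A)"
  unfolding finite_support_def pbar_def
  by (rule finite_subset[of _ "butlast ` {w. A w \<noteq> 0}"]) (auto simp: image_iff, metis butlast_snoc)

lemma weight_eq_sum_superset:
  "finite W \<Longrightarrow> {w. A w \<noteq> 0} \<subseteq> W \<Longrightarrow> weight A = (\<Sum>w\<in>W. A w * weight_word w)"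
  unfolding weight_def by (rule sum.mono_neutral_left) auto

lemma weight_pzero: "weight pzero = 0"
  unfolding weight_def pzero_def by simp

lemma weight_pmono: "weight (pmono u) = weight_word u"
  unfolding weight_def pmono_def by (simp add: Collect_conv_if)

lemma weight_sum:
  assumes "finite J" and "\<And>j. j \<in> J \<Longrightarrow> finite_support (A j)"
  shows "weight (\<lambda>w. \<Sum>j\<in>J. c j * A j w) = (\<Sum>j\<in>J. c j * weight (A j))"
proof -
  define W where "W = (\<Union>j\<in>J. {w. A j w \<noteq> 0})"
  have W: "finite W" using assms unfolding W_def finite_support_def by auto
  have "weight (\<lambda>w. \<Sum>j\<in>J. c j * A j w) = (\<Sum>w\<in>W. (\<Sum>j\<in>J. c j * A j w) * weight_word w)"
    by (rule weight_eq_sum_superset[OF W]) (force simp: W_def intro: sum.neutral)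
  also have "\<dots> = (\<Sum>j\<in>J. c j * (\<Sum>w\<in>W. A j w * weight_word w))"
    by (simp add: sum_distrib_left sum_distrib_right sum.swap[of _ W] mult.assoc)
  also have "\<dots> = (\<Sum>j\<in>J. c j * weight (A j))"
    by (rule sum.cong[OF refl]) (subst weight_eq_sum_superset[OF W], auto simp: W_def)
  finally show ?thesis .
qed

lemma weight_padd:
  "finite_support A \<Longrightarrow> finite_support B \<Longrightarrow> weight (padd A B) = weight A + weight B"
  using weight_sum[of "{True, False}" "\<lambda>b. if b then A else B" "\<lambda>_. 1"]
  by (simp add: padd_def)

lemma weight_psmult: "finite_support A \<Longrightarrow> weight (psmult c A) = c * weight A"
  using weight_sum[of "{()}" "\<lambda>_. A" "\<lambda>_. c"] by (simp add: psmult_def)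

lemma weight_psub:
  "finite_support A \<Longrightarrow> finite_support B \<Longrightarrow> weight (psub A B) = weight A - weight B"
  using weight_sum[of "{True, False}" "\<lambda>b. if b then A else B" "\<lambda>b. if b then 1 else -1"]
  by (simp add: psub_def)

lemma weight_word_append: "weight_word (u @ v) = weight_word u * weight_word v"
  unfolding weight_word_def by (simp add: power_add algebra_simps)

lemma weight_lmul_word:
  assumes "finite_support A"
  shows "weight (lmul_word u A) = weight_word u * weight A"
proof -
  have "weight (lmul_word u A) = (\<Sum>w\<in>(\<lambda>v. u @ v) ` {w. A w \<noteq> 0}. lmul_word u A w * weight_word w)"
    unfolding weight_def support_lmul_word ..
  also have "\<dots> = (\<Sum>v\<in>{w. A w \<noteq> 0}. A v * weight_word (u @ v))"
    by (subst sum.reindex) (auto simp: inj_on_def lmul_word_def)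
  also have "\<dots> = weight_word u * weight A"
    by (simp add: weight_word_append weight_def sum_distrib_left algebra_simps)
  finally show ?thesis .
qed

lemma pbar_lmul_word:
  "pbar (lmul_word u A) = padd (lmul_word u (pbar A))
     (psmult (A []) (if u \<noteq> [] \<and> last u = LN then pmono (butlast u) else pzero))"
proof
  fix w
  have "(w @ [LN] = u) \<longleftrightarrow> u \<noteq> [] \<and> last u = LN \<and> w = butlast u"
    by (auto, metis append_butlast_last_id)
  moreover have "w @ [LN] \<noteq> u" if "length u \<le> length w"
    using that by auto
  moreover have "take (length u) w \<noteq> u" if "\<not> length u \<le> length w"
    using that by auto
  ultimately show "pbar (lmul_word u A) w = padd (lmul_word u (pbar A))
     (psmult (A []) (if u \<noteq> [] \<and> last u = LN then pmono (butlast u) else pzero)) w"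
    by (cases "length u \<le> length w")
       (auto simp: pbar_def lmul_word_def padd_def psmult_def pmono_def pzero_def)
qed

lemma weight_pbar_lmul_word:
  assumes "finite_support A"
  shows "weight (pbar (lmul_word u A)) = weight_word u * weight (pbar A)
     + (if u \<noteq> [] \<and> last u = LN then A [] * weight_word (butlast u) else 0)"
  unfolding pbar_lmul_word
  by (subst weight_padd)
     (auto simp: assms finite_support_lmul_word finite_support_pbar finite_support_psmult
       finite_support_pmono finite_support_pzero weight_lmul_word weight_psmult weight_pmono
       weight_pzero)

section \<open>Weights of the bar parts of \<open>R\<close> and \<open>S\<close>\<close>

lemma RS_neg: "j < 0 \<Longrightarrow> RS k j = (pzero, pzero)"
  by (cases k) auto

lemma RS_Suc_lmul_word:
  assumes "j \<ge> 0"
  shows "fst (RS (Suc k) j) =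
           padd (psmult (-1) (padd (lmul_word [LN, LN] (fst (RS k j))) (lmul_word [LD] (fst (RS k j)))))
             (lmul_word [LN] (snd (RS k j)))"
    and "snd (RS (Suc k) j) =
           padd (psub (lmul_word [LD, LN] (fst (RS k j))) (lmul_word [LD] (snd (RS k j))))
             (lmul_word [LN] (fst (RS k (j - 1))))"
  using assms by (simp_all add: pmul_padd_left pmul_pmono pN_eq_pmono pD_eq_pmono lmul_word_pmono)

lemma finite_support_RS: "finite_support (fst (RS k j)) \<and> finite_support (snd (RS k j))"
proof (induction k arbitrary: j)
  case 0
  show ?case
    by (simp add: finite_support_pzero finite_support_pmono flip: pmono_Nil_eq_pone)
next
  case (Suc k)
  show ?case
  proof (cases "j < 0")
    case True
    then show ?thesis by (simp add: RS_neg finite_support_pzero)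
  next
    case False
    then show ?thesis
      unfolding RS_Suc_lmul_word[OF leI[OF False]] using Suc.IH
      by (auto intro!: finite_support_padd finite_support_psub finite_support_psmult
          finite_support_lmul_word)
  qed
qed

lemma RS_Nil: "fst (RS k j) [] = (if k = 0 \<and> j = 0 then 1 else 0) \<and> snd (RS k j) [] = 0"
proof (cases k)
  case 0
  then show ?thesis by (simp add: pone_def pzero_def)
next
  case (Suc k')
  then show ?thesis
    by (cases "j < 0")
       (simp_all add: RS_neg RS_Suc_lmul_word pzero_def padd_def psub_def psmult_def lmul_word_def
         del: RS.simps)
qed

definition wbarR :: "nat \<Rightarrow> int \<Rightarrow> real" where
  "wbarR k j = weight (pbar (fst (RS k j)))"

definition wbarS :: "nat \<Rightarrow> int \<Rightarrow> real" where
  "wbarS k j = weight (pbar (snd (RS k j)))"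

lemma wbar_RS_0: "wbarR 0 j = 0" "wbarS 0 j = 0"
proof -
  have "pbar pone = pzero" "pbar pzero = pzero"
    by (auto simp: pbar_def pone_def pzero_def)
  then show "wbarR 0 j = 0" "wbarS 0 j = 0"
    by (simp_all add: wbarR_def wbarS_def weight_pzero)
qed

lemma wbar_RS_neg: "j < 0 \<Longrightarrow> wbarR k j = 0" "j < 0 \<Longrightarrow> wbarS k j = 0"
proof -
  have "pbar pzero = pzero"
    by (auto simp: pbar_def pzero_def)
  then show "j < 0 \<Longrightarrow> wbarR k j = 0" "j < 0 \<Longrightarrow> wbarS k j = 0"
    by (simp_all add: wbarR_def wbarS_def RS_neg weight_pzero)
qed

lemma wbar_RS_Suc:
  assumes "j \<ge> 0"
  shows "wbarR (Suc k) j = -3 * wbarR k j + 2 * wbarS k j - (if k = 0 \<and> j = 0 then 2 else 0)"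
    and "wbarS (Suc k) j = -2 * wbarR k j + wbarS k j + 2 * wbarR k (j - 1)
          - (if k = 0 \<and> j = 0 then 1 else 0) + (if k = 0 \<and> j = 1 then 1 else 0)"
proof -
  have fin: "finite_support (fst (RS k i))" "finite_support (snd (RS k i))" for i
    using finite_support_RS by blast+
  have Nil: "fst (RS k i) [] = (if k = 0 \<and> i = 0 then 1 else 0)" "snd (RS k i) [] = 0" for i
    using RS_Nil by blast+
  have ww: "weight_word [LN, LN] = 4" "weight_word [LD] = -1" "weight_word [LN] = 2"
    "weight_word [LD, LN] = -2" "weight_word [] = 1"
    by (simp_all add: weight_word_def)
  have pbar: "pbar (padd A B) = padd (pbar A) (pbar B)" "pbar (psub A B) = psub (pbar A) (pbar B)"
    "pbar (psmult c A) = psmult c (pbar A)" for A B c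
    by (simp_all add: pbar_def padd_def psub_def psmult_def)
  show "wbarR (Suc k) j = -3 * wbarR k j + 2 * wbarS k j - (if k = 0 \<and> j = 0 then 2 else 0)"
      "wbarS (Suc k) j = -2 * wbarR k j + wbarS k j + 2 * wbarR k (j - 1)
          - (if k = 0 \<and> j = 0 then 1 else 0) + (if k = 0 \<and> j = 1 then 1 else 0)"
    unfolding wbarR_def wbarS_def RS_Suc_lmul_word[OF assms] pbar
    by (simp_all add: weight_padd weight_psub weight_psmult fin finite_support_padd
        finite_support_psub finite_support_psmult finite_support_lmul_word finite_support_pbar
        weight_pbar_lmul_word ww Nil del: RS.simps)
qed

definition even_binom :: "nat \<Rightarrow> int \<Rightarrow> real" where
  "even_binom m j = (if j < 0 then 0 else 4 ^ nat j * real (m choose (2 * nat j)))"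

definition odd_binom :: "nat \<Rightarrow> int \<Rightarrow> real" where
  "odd_binom m j = (if j < 0 then 0 else 4 ^ nat j * real (m choose (2 * nat j + 1)))"

lemma even_binom_Suc: "even_binom (Suc m) j = even_binom m j + 4 * odd_binom m (j - 1)"
proof (cases "j \<le> 0")
  case True
  then show ?thesis by (auto simp: even_binom_def odd_binom_def)
next
  case False
  then obtain i where i: "j = int (Suc i)"
    by (metis gr0_conv_Suc not_le pos_int_cases)
  have "real (Suc m choose (2 * Suc i)) = real (m choose (2 * i + 1)) + real (m choose (2 * Suc i))"
    by (simp add: numeral_2_eq_2)
  moreover have "nat j = Suc i" "nat (j - 1) = i"
    using i by simp_all
  ultimately show ?thesis
    using i by (simp add: even_binom_def odd_binom_def algebra_simps)
qed

lemma odd_binom_Suc: "odd_binom (Suc m) j = odd_binom m j + even_binom m j"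
  by (simp add: even_binom_def odd_binom_def algebra_simps)

definition wbarR_closed :: "nat \<Rightarrow> int \<Rightarrow> real" where
  "wbarR_closed m j = (-1) ^ m * (-2 * even_binom m j - 2 * odd_binom m j - 2 * odd_binom m (j - 1))"

definition wbarS_closed :: "nat \<Rightarrow> int \<Rightarrow> real" where
  "wbarS_closed m j = (-1) ^ m *
     (- even_binom m j + even_binom m (j - 1) - 2 * odd_binom m j + 2 * odd_binom m (j - 1))"

lemma wbar_RS_closed_form: "wbarR (Suc m) j = wbarR_closed m j \<and> wbarS (Suc m) j = wbarS_closed m j"
proof (induction m arbitrary: j)
  case 0
  show ?case
  proof (cases "j < 0")
    case True
    then show ?thesis
      by (simp add: wbar_RS_neg wbarR_closed_def wbarS_closed_def even_binom_def odd_binom_def)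
  next
    case False
    then have "even_binom 0 j = (if j = 0 then 1 else 0)"
      "even_binom 0 (j - 1) = (if j = 1 then 1 else 0)"
      "odd_binom 0 j = 0" "odd_binom 0 (j - 1) = 0"
      by (auto simp: even_binom_def odd_binom_def)
    with False show ?thesis
      by (simp add: wbar_RS_Suc wbar_RS_0 wbarR_closed_def wbarS_closed_def)
  qed
next
  case (Suc m)
  show ?case
  proof (cases "j < 0")
    case True
    then show ?thesis
      by (simp add: wbar_RS_neg wbarR_closed_def wbarS_closed_def even_binom_def odd_binom_def)
  next
    case False
    have "j - 1 - 1 = j - 2" by simp
    with False show ?thesis
      by (simp add: wbar_RS_Suc[of j "Suc m"] Suc.IH wbarR_closed_def wbarS_closed_def
          even_binom_Suc odd_binom_Suc algebra_simps)
  qed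
qed

lemma wbar_RS_eq_closed:
  assumes "n \<ge> 1"
  shows "wbarR (n + j) i = wbarR_closed (n + j - 1) i" and "wbarS (n + j) i = wbarS_closed (n + j - 1) i"
  using wbar_RS_closed_form[of "n + j - 1" i] assms
  by (simp_all add: wbarR_closed_def wbarS_closed_def Suc_diff_le)

section \<open>Alternating binomial sums\<close>

lemma alternating_binomial_sum_Suc:
  fixes g :: "nat \<Rightarrow> 'a::comm_ring_1"
  shows "(\<Sum>j\<le>Suc m. (-1) ^ j * of_nat (Suc m choose j) * g j)
       = (\<Sum>j\<le>m. (-1) ^ j * of_nat (m choose j) * (g j - g (Suc j)))"
proof -
  define A where "A = (\<Sum>i\<le>m. (-1) ^ i * of_nat (m choose Suc i) * g (Suc i))"
  define B where "B = (\<Sum>i\<le>m. (-1) ^ i * of_nat (m choose i) * g (Suc i))"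
  have pascal: "(-1) ^ Suc i * of_nat (Suc m choose Suc i) * g (Suc i)
      = - ((-1) ^ i * of_nat (m choose i) * g (Suc i)) - (-1) ^ i * of_nat (m choose Suc i) * g (Suc i)"
    for i
    by (simp add: algebra_simps)
  have "(\<Sum>j\<le>Suc m. (-1) ^ j * of_nat (Suc m choose j) * g j) = g 0 - B - A"
    unfolding A_def B_def
    by (simp only: sum.atMost_Suc_shift pascal sum_subtractf sum_negf; simp)
  moreover have "(\<Sum>j\<le>m. (-1) ^ j * of_nat (m choose j) * g j) = g 0 - A"
  proof -
    have "(\<Sum>j\<le>m. (-1) ^ j * of_nat (m choose j) * g j)
        = (\<Sum>j\<le>Suc m. (-1) ^ j * of_nat (m choose j) * g j)"
      by (simp add: binomial_eq_0)
    also have "\<dots> = g 0 - A"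
      unfolding A_def by (subst sum.atMost_Suc_shift) (simp add: sum_negf)
    finally show ?thesis .
  qed
  moreover have "(\<Sum>j\<le>m. (-1) ^ j * of_nat (m choose j) * (g j - g (Suc j)))
      = (\<Sum>j\<le>m. (-1) ^ j * of_nat (m choose j) * g j) - B"
    unfolding B_def by (simp add: algebra_simps sum_subtractf)
  ultimately show ?thesis by simp
qed

lemma degree_forward_difference_less:
  fixes p :: "'a::field_char_0 poly"
  assumes "p - pcompose p [:1, 1:] \<noteq> 0"
  shows "degree (p - pcompose p [:1, 1:]) < degree p"
proof -
  let ?q = "pcompose p [:1, 1:]"
  have deg: "degree ?q = degree p"
    by (simp add: degree_pcompose)
  moreover have "lead_coeff ?q = lead_coeff p"
    by (simp add: lead_coeff_comp)
  ultimately have top: "coeff (p - ?q) (degree p) = 0"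
    by simp
  have "degree (p - ?q) \<le> degree p"
    using degree_diff_le[of p "degree p" ?q] deg by simp
  moreover have "degree (p - ?q) \<noteq> degree p"
    using assms top leading_coeff_0_iff by metis
  ultimately show ?thesis by simp
qed

lemma alternating_binomial_sum_poly:
  fixes p :: "'a::field_char_0 poly"
  assumes "degree p < m"
  shows "(\<Sum>j\<le>m. (-1) ^ j * of_nat (m choose j) * poly p (of_nat j)) = 0"
  using assms
proof (induction m arbitrary: p)
  case 0
  then show ?case by simp
next
  case (Suc m)
  let ?q = "p - pcompose p [:1, 1:]"
  have "(\<Sum>j\<le>Suc m. (-1) ^ j * of_nat (Suc m choose j) * poly p (of_nat j))
      = (\<Sum>j\<le>m. (-1) ^ j * of_nat (m choose j) * poly ?q (of_nat j))"
    by (subst alternating_binomial_sum_Suc) (simp add: poly_pcompose algebra_simps)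
  also have "\<dots> = 0"
  proof (cases "?q = 0")
    case False
    then have "degree ?q < m"
      using degree_forward_difference_less[of p] Suc.prems by simp
    then show ?thesis by (rule Suc.IH)
  qed simp
  finally show ?case .
qed

lemma alternating_binomial_sum_reciprocal:
  fixes x :: real
  assumes "x > 0"
  shows "(\<Sum>j\<le>m. (-1) ^ j * real (m choose j) * (1 / (x + real j))) = fact m / pochhammer x (Suc m)"
  using assms
proof (induction m arbitrary: x)
  case 0
  then show ?case by simp
next
  case (Suc m)
  have "(\<Sum>j\<le>Suc m. (-1) ^ j * real (Suc m choose j) * (1 / (x + real j)))
      = (\<Sum>j\<le>m. (-1) ^ j * real (m choose j) * (1 / (x + real j)))
        - (\<Sum>j\<le>m. (-1) ^ j * real (m choose j) * (1 / ((x + 1) + real j)))"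
    by (subst alternating_binomial_sum_Suc) (simp add: algebra_simps sum_subtractf)
  also have "\<dots> = fact m / pochhammer x (Suc m) - fact m / pochhammer (x + 1) (Suc m)"
    using Suc.IH[of x] Suc.IH[of "x + 1"] Suc.prems by simp
  also have "\<dots> = (fact m * (x + real (Suc m)) - fact m * x) / pochhammer x (Suc (Suc m))"
  proof -
    have "fact m / pochhammer x (Suc m) = fact m * (x + real (Suc m)) / pochhammer x (Suc (Suc m))"
      unfolding pochhammer_rec'[of x "Suc m"] using Suc.prems by simp
    moreover have "fact m / pochhammer (x + 1) (Suc m) = fact m * x / pochhammer x (Suc (Suc m))"
      unfolding pochhammer_rec[of x "Suc m"] using Suc.prems by simp
    ultimately show ?thesis
      by (simp add: diff_divide_distrib)
  qed
  also have "\<dots> = fact (Suc m) / pochhammer x (Suc (Suc m))"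
    by (simp add: algebra_simps)
  finally show ?case .
qed

lemma alternating_binomial_sum_rational:
  fixes p :: "real poly" and x :: real
  assumes "degree p \<le> m" and "0 < m" and "x > 0"
  shows "(\<Sum>j\<le>m. (-1) ^ j * real (m choose j) * (poly p (real j) / (x + real j)))
       = poly p (-x) * fact m / pochhammer x (Suc m)"
proof -
  define s where "s = synthetic_div p (-x)"
  have division: "poly p y = (y + x) * poly s y + poly p (-x)" for y
    using arg_cong[OF synthetic_div_correct'[of "-x" p], of "\<lambda>q. poly q y"]
    unfolding s_def by (simp add: algebra_simps)
  have "degree s < m"
    unfolding s_def using assms by (simp add: degree_synthetic_div)
  have "(\<Sum>j\<le>m. (-1) ^ j * real (m choose j) * (poly p (real j) / (x + real j)))
      = (\<Sum>j\<le>m. (-1) ^ j * real (m choose j) * poly s (real j))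
        + poly p (-x) * (\<Sum>j\<le>m. (-1) ^ j * real (m choose j) * (1 / (x + real j)))"
  proof -
    have "poly p (real j) / (x + real j) = poly s (real j) + poly p (-x) * (1 / (x + real j))" for j
      using assms(3) unfolding division[of "real j"] by (simp add: field_simps)
    then show ?thesis by (simp add: algebra_simps sum.distrib sum_distrib_left)
  qed
  also have "\<dots> = poly p (-x) * fact m / pochhammer x (Suc m)"
    using alternating_binomial_sum_poly[OF \<open>degree s < m\<close>]
      alternating_binomial_sum_reciprocal[OF assms(3)] by simp
  finally show ?thesis .
qed

section \<open>Factorials and Pochhammer symbols\<close>

lemma fact_add_eq_pochhammer:
  "fact (a + b) = (fact a * pochhammer (of_nat a + 1) b :: 'a::{semiring_char_0, comm_semiring_1})"
  unfolding pochhammer_fact by (simp add: pochhammer_product' add.commute)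

lemma choose_mult_fact_mult_fact:
  assumes "k \<le> a" and "k \<le> m + c"
  shows "real (m choose k) * fact a * fact (m + c - k)
       = fact m * pochhammer (real k + 1) (a - k) * pochhammer (real m - real k + 1) c"
proof (cases "k \<le> m")
  case True
  have "real (m choose k) * fact k * fact (m - k) = fact m"
    using binomial_fact[OF True, where 'a=real] by simp
  moreover have "fact a = (fact k * pochhammer (real k + 1) (a - k) :: real)"
    using fact_add_eq_pochhammer[where 'a=real, of k "a - k"] assms(1) by simp
  moreover have "fact (m + c - k) = (fact (m - k) * pochhammer (real m - real k + 1) c :: real)"
    using fact_add_eq_pochhammer[where 'a=real, of "m - k" c] True by (simp add: of_nat_diff)
  ultimately show ?thesis
    by (simp add: algebra_simps)
next
  case False
  then have "real m - real k + 1 = - real (k - m - 1)"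
    by (simp add: of_nat_diff)
  moreover have "k - m - 1 < c"
    using False assms(2) by simp
  ultimately have "pochhammer (real m - real k + 1) c = 0"
    by (metis pochhammer_of_nat_eq_0_iff)
  with False show ?thesis by simp
qed

lemma pochhammer_2: "pochhammer z 2 = z * (z + 1)"
  and pochhammer_3: "pochhammer z 3 = z * (z + 1) * (z + 2)"
  by (simp_all add: numeral_eq_Suc pochhammer_Suc algebra_simps)

lemma fact_odd_eq_pochhammer: "fact (2 * j + 1) = (4 ^ j * fact j * pochhammer (3/2) j :: real)"
proof (induction j)
  case (Suc j)
  have "2 * Suc j + 1 = Suc (Suc (2 * j + 1))" by simp
  with Suc show ?case by (simp add: pochhammer_rec' algebra_simps)
qed simp

lemma choose_mult_facts_shifted:
  assumes "n \<ge> 1" "j \<le> n + d" "2 * j \<le> k + d + 1" "k \<le> 2 * j + 1"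
  shows "4 ^ j * real ((n + j - 1) choose k) * (fact j * pochhammer (3/2) j * fact (n + d - j))
       = fact (n + j - 1) * pochhammer (real k + 1) (2 * j + 1 - k)
           * pochhammer (real n + real j - real k) (k + d + 1 - 2 * j)"
proof -
  have "n + j - 1 + (k + d + 1 - 2 * j) - k = n + d - j"
    using assms by simp
  moreover have "real (n + j - 1) - real k + 1 = real n + real j - real k"
    using assms by (simp add: of_nat_diff)
  ultimately show ?thesis
    using choose_mult_fact_mult_fact[of k "2 * j + 1" "n + j - 1" "k + d + 1 - 2 * j"] assms
    unfolding fact_odd_eq_pochhammer by (simp add: ac_simps add_diff_eq)
qed

lemma pochhammer_half_exchange:
  assumes "n \<ge> 1"
  shows "pochhammer (real n + 1/2) j * pochhammer (3/2) (n - 1)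
       = pochhammer (3/2) j * pochhammer (real j + 3/2 :: real) (n - 1)"
proof -
  have "3/2 + real (n - 1) = real n + 1/2"
    using assms by (simp add: of_nat_diff)
  then show ?thesis
    using pochhammer_product'[of "3/2::real" "n - 1" j] pochhammer_product'[of "3/2::real" j "n - 1"]
    by (simp add: add.commute mult.commute)
qed

lemma brace_eq_pochhammer:
  "brace (int n) (int j) = pochhammer (real n + 1/2) j / fact (n + j)"
proof -
  have "real n + 1/2 \<notin> \<int>\<^sub>\<le>\<^sub>0"
    by (auto elim!: nonpos_Ints_cases)
  then have "Gamma (real n + real j + 1/2) = pochhammer (real n + 1/2) j * Gamma (real n + 1/2)"
    "Gamma (real n + 1/2) \<noteq> 0"
    by (simp_all add: pochhammer_Gamma Gamma_nonzero algebra_simps)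
  then show ?thesis
    unfolding brace_def by (simp add: nat_add_distrib)
qed

lemma brace_shift_eq_pochhammer:
  "brace (int n + 1) (int j - 1) = pochhammer (real n + 1/2) j / ((real n + 1/2) * fact (n + j))"
proof -
  have z: "real n + 1/2 \<notin> \<int>\<^sub>\<le>\<^sub>0"
    by (auto elim!: nonpos_Ints_cases)
  have "brace (int n + 1) (int j - 1)
      = Gamma (real n + 1/2 + real j) / (fact (n + j) * Gamma (real n + 1/2 + 1))"
    unfolding brace_def by (simp add: nat_add_distrib add_ac)
  also have "\<dots> = pochhammer (real n + 1/2) j * Gamma (real n + 1/2)
                    / (fact (n + j) * ((real n + 1/2) * Gamma (real n + 1/2)))"
  proof -
    have "Gamma (real n + 1/2 + real j) = pochhammer (real n + 1/2) j * Gamma (real n + 1/2)"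
      using pochhammer_Gamma[OF z, of j] Gamma_nonzero[OF z] by simp
    then show ?thesis
      by (simp only: Gamma_plus1[OF z])
  qed
  also have "\<dots> = pochhammer (real n + 1/2) j / ((real n + 1/2) * fact (n + j))"
    using Gamma_nonzero[OF z] by simp
  finally show ?thesis .
qed

lemma dfact_pos: "dfact n > 0"
  by (induction n rule: dfact.induct) simp_all

lemma dfact_odd: "dfact (2 * n + 1) = (2 * n + 1) * dfact (2 * n - 1)"
  by (cases n) simp_all

lemma fact_even_eq_dfact: "fact (2 * n) = (2 ^ n * fact n * real (dfact (2 * n - 1)) :: real)"
proof (induction n)
  case (Suc n)
  have "fact (2 * Suc n) = (2 * real n + 2) * ((2 * real n + 1) * (fact (2 * n) :: real))"
    by (simp add: algebra_simps)
  also have "\<dots> = 2 ^ Suc n * fact (Suc n) * real ((2 * n + 1) * dfact (2 * n - 1))"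
    unfolding Suc.IH by (simp add: algebra_simps)
  also have "(2 * n + 1) * dfact (2 * n - 1) = dfact (2 * Suc n - 1)"
    using dfact_odd[of n] by simp
  finally show ?case .
qed simp

lemma pochhammer_three_halves: "pochhammer (3/2) k = (2 * real k + 1) * pochhammer (1/2 :: real) k"
  using pochhammer_rec[of "1/2 :: real" k] pochhammer_rec'[of "1/2 :: real" k]
  by (simp add: algebra_simps)

lemma pochhammer_half_reflect: "pochhammer (1/2 - real k) k = (-1) ^ k * pochhammer (1/2 :: real) k"
  using pochhammer_minus[of "real k - 1/2 :: real" k] by simp

lemma pochhammer_of_nat_eq_fact: "n \<ge> 1 \<Longrightarrow> pochhammer (real n) l = fact (n - 1 + l) / fact (n - 1)"
  using fact_add_eq_pochhammer[where 'a=real, of "n - 1" l] by (simp add: of_nat_diff)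

section \<open>Clearing factorials from the closed forms\<close>

lemma even_odd_binom_of_nat:
  "even_binom m (int j) = 4 ^ j * real (m choose (2 * j))"
  "odd_binom m (int j) = 4 ^ j * real (m choose (2 * j + 1))"
  by (simp_all add: even_binom_def odd_binom_def)

lemma even_odd_binom_of_nat_minus_1:
  assumes "j \<ge> 1"
  shows "4 * even_binom m (int j - 1) = 4 ^ j * real (m choose (2 * j - 2))"
    and "4 * odd_binom m (int j - 1) = 4 ^ j * real (m choose (2 * j - 1))"
proof -
  obtain i where "j = Suc i"
    using assms by (cases j) auto
  moreover have "2 * Suc i - 2 = 2 * i" "2 * Suc i - 1 = 2 * i + 1"
    by simp_all
  ultimately show "4 * even_binom m (int j - 1) = 4 ^ j * real (m choose (2 * j - 2))"
    and "4 * odd_binom m (int j - 1) = 4 ^ j * real (m choose (2 * j - 1))"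
    by (simp_all add: even_binom_def odd_binom_def)
qed

text \<open>By \<open>fact_odd_eq_pochhammer\<close>, the factor \<open>F\<close> below is \<open>(2j+1)! (n+d-j)! / 4\<^sup>j\<close>.\<close>

lemma even_odd_binom_mult_facts:
  assumes n: "n \<ge> 1" and j: "j \<le> n + d"
  defines "F \<equiv> fact j * pochhammer (3/2) j * fact (n + d - j) :: real"
  shows "even_binom (n + j - 1) (int j) * F
           = fact (n + j - 1) * (2 * real j + 1) * pochhammer (real n - real j) (d + 1)"
    and "odd_binom (n + j - 1) (int j) * F
           = fact (n + j - 1) * pochhammer (real n - real j - 1) (d + 2)"
    and "4 * odd_binom (n + j - 1) (int j - 1) * F
           = fact (n + j - 1) * (2 * real j * (2 * real j + 1)) * pochhammer (real n - real j + 1) d"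
    and "d \<ge> 1 \<Longrightarrow> 4 * even_binom (n + j - 1) (int j - 1) * F
           = fact (n + j - 1) * ((2 * real j - 1) * (2 * real j) * (2 * real j + 1))
               * pochhammer (real n - real j + 2) (d - 1)"
proof goal_cases
  case 1
  show ?case
    using choose_mult_facts_shifted[OF n j, of "2 * j", folded F_def]
    by (simp add: even_odd_binom_of_nat algebra_simps)
next
  case 2
  show ?case
    using choose_mult_facts_shifted[OF n j, of "2 * j + 1", folded F_def]
    by (simp add: even_odd_binom_of_nat algebra_simps)
next
  case 3
  show ?case
  proof (cases "j = 0")
    case False
    then show ?thesis
      using choose_mult_facts_shifted[OF n j, of "2 * j - 1", folded F_def]
      by (simp add: even_odd_binom_of_nat_minus_1 pochhammer_2 of_nat_diff algebra_simps)
  qed (simp add: odd_binom_def)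
next
  case 4
  show ?case
  proof (cases "j = 0")
    case False
    then show ?thesis
      using choose_mult_facts_shifted[OF n j, of "2 * j - 2", folded F_def] \<open>d \<ge> 1\<close>
      by (simp add: even_odd_binom_of_nat_minus_1 pochhammer_3 of_nat_diff algebra_simps)
  qed (simp add: even_binom_def)
qed

definition alpha_quad :: "nat \<Rightarrow> real \<Rightarrow> real" where
  "alpha_quad n x =
     8 * x\<^sup>2 + (16 * (real n)\<^sup>2 + 4 * real n - 2) * x - 8 * (real n) ^ 3 - 4 * (real n)\<^sup>2 + 4 * real n"

lemma wbarS_closed_mult_facts:
  assumes n: "n \<ge> 1" and j: "j \<le> n + 1"
  shows "4 * wbarS_closed (n + j - 1) (int j) * (fact j * pochhammer (3/2) j * fact (n + 1 - j))
       = (-1) ^ (n + j - 1) * fact (n + j - 1) * alpha_quad n (real j)"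
proof -
  define m F where "m = n + j - 1" and "F = (fact j * pochhammer (3/2) j * fact (n + 1 - j) :: real)"
  have "even_binom m (int j) * F = fact m * ((2 * real j + 1) * (real n - real j) * (real n - real j + 1))"
    and "odd_binom m (int j) * F = fact m * ((real n - real j - 1) * (real n - real j) * (real n - real j + 1))"
    and "4 * odd_binom m (int j - 1) * F = fact m * (2 * real j * (2 * real j + 1) * (real n - real j + 1))"
    and "4 * even_binom m (int j - 1) * F = fact m * ((2 * real j - 1) * (2 * real j) * (2 * real j + 1))"
    using even_odd_binom_mult_facts[of n j 1] n j unfolding m_def F_def
    by (simp_all add: pochhammer_Suc algebra_simps)
  note pieces = this
  have "4 * wbarS_closed m (int j) * F
      = (-1) ^ m * (-4 * (even_binom m (int j) * F) + 4 * even_binom m (int j - 1) * F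
                    - 8 * (odd_binom m (int j) * F) + 2 * (4 * odd_binom m (int j - 1) * F))"
    unfolding wbarS_closed_def by (simp add: algebra_simps)
  also have "\<dots> = (-1) ^ m * fact m * alpha_quad n (real j)"
    unfolding pieces
    by (simp add: alpha_quad_def algebra_simps power2_eq_square power3_eq_cube)
  finally show ?thesis
    unfolding m_def F_def .
qed

lemma wbarR_closed_mult_facts:
  assumes n: "n \<ge> 1" and j: "j \<le> n"
  shows "4 * wbarR_closed (n + j - 1) (int j) * (fact j * pochhammer (3/2) j * fact (n - j))
       = (-1) ^ (n + j - 1) * fact (n + j - 1) * (-2 * (4 * (real n)\<^sup>2 + 2 * real j))"
proof -
  define m F where "m = n + j - 1" and "F = (fact j * pochhammer (3/2) j * fact (n - j) :: real)"
  have "even_binom m (int j) * F = fact m * ((2 * real j + 1) * (real n - real j))"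
    and "odd_binom m (int j) * F = fact m * ((real n - real j - 1) * (real n - real j))"
    and "4 * odd_binom m (int j - 1) * F = fact m * (2 * real j * (2 * real j + 1))"
    using even_odd_binom_mult_facts(1-3)[of n j 0] n j unfolding m_def F_def
    by (simp_all add: pochhammer_Suc algebra_simps)
  note pieces = this
  have "4 * wbarR_closed m (int j) * F
      = (-1) ^ m * (-8 * (even_binom m (int j) * F) - 8 * (odd_binom m (int j) * F)
                    - 2 * (4 * odd_binom m (int j - 1) * F))"
    unfolding wbarR_closed_def by (simp add: algebra_simps)
  also have "\<dots> = (-1) ^ m * fact m * (-2 * (4 * (real n)\<^sup>2 + 2 * real j))"
    unfolding pieces by (simp add: algebra_simps power2_eq_square)
  finally show ?thesis
    unfolding m_def F_def .
qed

section \<open>The summands of \<open>alpha\<close> and \<open>Zp\<close>\<close>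

definition pochhammer_poly :: "'a::comm_semiring_1 \<Rightarrow> nat \<Rightarrow> 'a poly" where
  "pochhammer_poly a k = (\<Prod>i<k. [:a + of_nat i, 1:])"

lemma poly_pochhammer_poly: "poly (pochhammer_poly a k) x = pochhammer (x + a) k"
  by (simp add: pochhammer_poly_def poly_prod pochhammer_prod atLeast0LessThan algebra_simps)

lemma degree_pochhammer_poly: "degree (pochhammer_poly a k) \<le> k"
proof -
  have "degree (pochhammer_poly a k) \<le> sum (degree \<circ> (\<lambda>i. [:a + of_nat i, 1:])) {..<k}"
    unfolding pochhammer_poly_def by (rule degree_prod_sum_le) simp
  then show ?thesis by simp
qed

definition alpha_poly :: "nat \<Rightarrow> real poly" where
  "alpha_poly n = pochhammer_poly (3/2) (n - 1) *
     [:- 8 * (real n) ^ 3 - 4 * (real n)\<^sup>2 + 4 * real n, 16 * (real n)\<^sup>2 + 4 * real n - 2, 8:]"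

definition Z_poly :: "nat \<Rightarrow> real poly" where
  "Z_poly n = pochhammer_poly (3/2) (n - 1) * [:4 * (real n)\<^sup>2, 2:]"

lemma poly_alpha_poly: "poly (alpha_poly n) x = pochhammer (x + 3/2) (n - 1) * alpha_quad n x"
  by (simp add: alpha_poly_def poly_pochhammer_poly alpha_quad_def algebra_simps power2_eq_square)

lemma poly_Z_poly: "poly (Z_poly n) x = pochhammer (x + 3/2) (n - 1) * (4 * (real n)\<^sup>2 + 2 * x)"
  by (simp add: Z_poly_def poly_pochhammer_poly algebra_simps)

lemma degree_alpha_poly: "n \<ge> 1 \<Longrightarrow> degree (alpha_poly n) \<le> n + 1"
proof -
  assume "n \<ge> 1"
  have "degree (alpha_poly n) \<le> (n - 1) + 2"
    unfolding alpha_poly_def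
    by (rule order.trans[OF degree_mult_le add_mono[OF degree_pochhammer_poly]]) simp
  with \<open>n \<ge> 1\<close> show ?thesis by simp
qed

lemma degree_Z_poly: "n \<ge> 1 \<Longrightarrow> degree (Z_poly n) \<le> n"
proof -
  assume "n \<ge> 1"
  have "degree (Z_poly n) \<le> (n - 1) + 1"
    unfolding Z_poly_def
    by (rule order.trans[OF degree_mult_le add_mono[OF degree_pochhammer_poly]]) simp
  with \<open>n \<ge> 1\<close> show ?thesis by simp
qed

definition alpha_const :: "nat \<Rightarrow> real" where
  "alpha_const n = (-1) ^ (n - 1) / (4 * fact (n + 1) * pochhammer (3/2) (n - 1))"

definition Z_const :: "nat \<Rightarrow> real" where
  "Z_const n = (-1) ^ n / (2 * (real n + 1/2) * fact n * pochhammer (3/2) (n - 1))"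

lemma alpha_summand:
  assumes n: "n \<ge> 1" and j: "j \<le> n + 1"
  shows "brace (int n) (int j) * wbarS_closed (n + j - 1) (int j)
       = alpha_const n *
           ((-1) ^ j * real (Suc n choose j) * (poly (alpha_poly n) (real j) / (real n + real j)))"
proof -
  define m where "m = n + j - 1"
  have pos: "pochhammer (3/2) j > (0::real)" "pochhammer (3/2) (n - 1) > (0::real)" "real n + real j > 0"
    using n by (simp_all add: pochhammer_pos)
  have S: "wbarS_closed m (int j)
      = (-1) ^ m * fact m * alpha_quad n (real j) / (4 * fact j * pochhammer (3/2) j * fact (n + 1 - j))"
    using wbarS_closed_mult_facts[OF n j] pos unfolding m_def by (simp add: field_simps)
  have F: "fact (n + j) = (real n + real j) * fact m"
    using n unfolding m_def by (cases "n + j") auto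
  have P: "pochhammer (real n + 1/2) j
      = pochhammer (3/2) j * pochhammer (real j + 3/2) (n - 1) / pochhammer (3/2) (n - 1)"
    using pochhammer_half_exchange[OF n, of j] pos by (simp add: nonzero_eq_divide_eq)
  have C: "real (Suc n choose j) = fact (Suc n) / (fact j * fact (n + 1 - j))"
    using binomial_fact[of j "Suc n"] j by simp
  have sign: "(-1) ^ m = (-1) ^ (n - 1) * (-1 :: real) ^ j"
    using n unfolding m_def by (simp flip: power_add)
  show ?thesis
    unfolding m_def[symmetric] brace_eq_pochhammer S F P C sign alpha_const_def poly_alpha_poly
    using pos by (simp add: divide_simps)
qed

lemma Z_summand:
  assumes n: "n \<ge> 1" and j: "j \<le> n"
  shows "brace (int n + 1) (int j - 1) * wbarR_closed (n + j - 1) (int j)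
       = Z_const n * ((-1) ^ j * real (n choose j) * (poly (Z_poly n) (real j) / (real n + real j)))"
proof -
  define m q where "m = n + j - 1" and "q = 4 * (real n)\<^sup>2 + 2 * real j"
  have pos: "pochhammer (3/2) j > (0::real)" "pochhammer (3/2) (n - 1) > (0::real)" "real n + real j > 0"
    using n by (simp_all add: pochhammer_pos)
  have R: "wbarR_closed m (int j)
      = (-1) ^ m * fact m * (-2 * q) / (4 * fact j * pochhammer (3/2) j * fact (n - j))"
    using wbarR_closed_mult_facts[OF n j] pos unfolding m_def q_def by (simp add: field_simps)
  have F: "fact (n + j) = (real n + real j) * fact m"
    using n unfolding m_def by (cases "n + j") auto
  have P: "pochhammer (real n + 1/2) j
      = pochhammer (3/2) j * pochhammer (real j + 3/2) (n - 1) / pochhammer (3/2) (n - 1)"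
    using pochhammer_half_exchange[OF n, of j] pos by (simp add: nonzero_eq_divide_eq)
  have C: "real (n choose j) = fact n / (fact j * fact (n - j))"
    using binomial_fact[of j n] j by simp
  have sign: "(-1) ^ m = - ((-1) ^ n * (-1 :: real) ^ j)"
    using n unfolding m_def by (cases n) (simp_all flip: power_add)
  show ?thesis
    unfolding m_def[symmetric] brace_shift_eq_pochhammer R F P C sign Z_const_def poly_Z_poly
      q_def[symmetric]
    using pos by (simp add: divide_simps)
qed

lemma weight_pbar_alpha_eq_sum:
  "weight (pbar (alpha n)) = (\<Sum>j\<in>{0..n+1}. brace (int n) (int j) * wbarS (n + j) (int j))"
proof -
  have "pbar (alpha n) = (\<lambda>w. \<Sum>j\<in>{0..n+1}. brace (int n) (int j) * pbar (snd (RS (n + j) (int j))) w)"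
    by (rule ext) (simp add: pbar_def alpha_def S_def nat_add_distrib)
  then show ?thesis
    unfolding wbarS_def using finite_support_RS
    by (simp only:) (rule weight_sum, simp_all add: finite_support_pbar)
qed

lemma weight_pbar_Zp_eq_sum:
  "weight (pbar (Zp n)) = (\<Sum>j\<in>{0..n}. brace (int n + 1) (int j - 1) * wbarR (n + j) (int j))"
proof -
  have "pbar (Zp n) = (\<lambda>w. \<Sum>j\<in>{0..n}. brace (int n + 1) (int j - 1) * pbar (fst (RS (n + j) (int j))) w)"
    by (rule ext) (simp add: pbar_def Zp_def R_def nat_add_distrib)
  then show ?thesis
    unfolding wbarR_def using finite_support_RS
    by (simp only:) (rule weight_sum, simp_all add: finite_support_pbar)
qed

lemma weight_pbar_alpha_eq_rational:
  assumes n: "n \<ge> 1"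
  shows "weight (pbar (alpha n))
       = alpha_const n * (poly (alpha_poly n) (- real n) * fact (n + 1) / pochhammer (real n) (n + 2))"
proof -
  have "weight (pbar (alpha n))
      = (\<Sum>j\<le>n+1. alpha_const n * ((-1) ^ j * real (Suc n choose j)
                                    * (poly (alpha_poly n) (real j) / (real n + real j))))"
    unfolding weight_pbar_alpha_eq_sum atLeast0AtMost
    by (rule sum.cong[OF refl]) (use alpha_summand[OF n] in \<open>simp add: wbar_RS_eq_closed[OF n]\<close>)
  also have "\<dots> = alpha_const n * (\<Sum>j\<le>n+1. (-1) ^ j * real (Suc n choose j)
                                    * (poly (alpha_poly n) (real j) / (real n + real j)))"
    by (simp only: sum_distrib_left)
  also have "\<dots> = alpha_const n * (poly (alpha_poly n) (- real n) * fact (n + 1) / pochhammer (real n) (n + 2))"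
    using alternating_binomial_sum_rational[OF degree_alpha_poly[OF n], of "real n"] n by simp
  finally show ?thesis .
qed

lemma weight_pbar_Zp_eq_rational:
  assumes n: "n \<ge> 1"
  shows "weight (pbar (Zp n))
       = Z_const n * (poly (Z_poly n) (- real n) * fact n / pochhammer (real n) (n + 1))"
proof -
  have "weight (pbar (Zp n))
      = (\<Sum>j\<le>n. Z_const n * ((-1) ^ j * real (n choose j)
                                    * (poly (Z_poly n) (real j) / (real n + real j))))"
    unfolding weight_pbar_Zp_eq_sum atLeast0AtMost
    by (rule sum.cong[OF refl]) (use Z_summand[OF n] in \<open>simp add: wbar_RS_eq_closed[OF n]\<close>)
  also have "\<dots> = Z_const n * (\<Sum>j\<le>n. (-1) ^ j * real (n choose j)
                                    * (poly (Z_poly n) (real j) / (real n + real j)))"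
    by (simp only: sum_distrib_left)
  also have "\<dots> = Z_const n * (poly (Z_poly n) (- real n) * fact n / pochhammer (real n) (n + 1))"
    using alternating_binomial_sum_rational[OF degree_Z_poly[OF n], of "real n"] n by simp
  finally show ?thesis .
qed

lemma weight_pbar_alpha:
  assumes n: "n \<ge> 1"
  shows "weight (pbar (alpha n)) = - 3 / (2 ^ (n + 1) * real (dfact (2 * n - 1)))"
proof -
  define p f d where "p = pochhammer (1/2 :: real) (n - 1)" and "f = (fact (n - 1) :: real)"
    and "d = real (dfact (2 * n - 1))"
  have pos: "p > 0" "f > 0" "d > 0"
    unfolding p_def f_def d_def by (simp_all add: pochhammer_pos dfact_pos)
  have fn: "fact n = real n * f"
    using n unfolding f_def by (simp add: fact_reduce)
  have A: "poly (alpha_poly n) (- real n)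
      = (-1) ^ (n - 1) * p * (- 6 * real n * (2 * real n + 1) * (2 * real n - 1))"
    using pochhammer_half_reflect[of "n - 1"] n
    by (simp add: poly_alpha_poly alpha_quad_def p_def of_nat_diff algebra_simps power2_eq_square power3_eq_cube)
  have "n - 1 + (n + 2) = 2 * n + 1"
    using n by simp
  then have "pochhammer (real n) (n + 2) = fact (2 * n + 1) / f"
    using pochhammer_of_nat_eq_fact[OF n, of "n + 2"] unfolding f_def by (simp only:)
  also have "fact (2 * n + 1) = (2 * real n + 1) * fact (2 * n)"
    by simp
  finally have B: "pochhammer (real n) (n + 2) = (2 * real n + 1) * (2 ^ n * (real n * f) * d) / f"
    unfolding fact_even_eq_dfact fn d_def .
  have C: "pochhammer (3/2) (n - 1) = (2 * real n - 1) * p"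
    using n by (simp add: pochhammer_three_halves p_def of_nat_diff)
  have D: "fact (n + 1) = (real n + 1) * (real n * f)"
    using fn by simp
  show ?thesis
    unfolding weight_pbar_alpha_eq_rational[OF n] alpha_const_def A B C D d_def[symmetric]
    using pos n by (simp add: divide_simps)
qed

lemma weight_pbar_Zp:
  assumes n: "n \<ge> 1"
  shows "weight (pbar (Zp n)) = - 1 / (2 ^ (n - 1) * real (dfact (2 * n + 1)))"
proof -
  define p f d where "p = pochhammer (1/2 :: real) (n - 1)" and "f = (fact (n - 1) :: real)"
    and "d = real (dfact (2 * n - 1))"
  have pos: "p > 0" "f > 0" "d > 0"
    unfolding p_def f_def d_def by (simp_all add: pochhammer_pos dfact_pos)
  have fn: "fact n = real n * f"
    using n unfolding f_def by (simp add: fact_reduce)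
  have sign: "(-1) ^ (n - 1) = - ((-1) ^ n :: real)"
    using n by (simp add: power_eq_if)
  have A: "poly (Z_poly n) (- real n) = - ((-1) ^ n * p * (2 * real n * (2 * real n - 1)))"
    using pochhammer_half_reflect[of "n - 1"] n unfolding sign
    by (simp add: poly_Z_poly p_def of_nat_diff algebra_simps power2_eq_square)
  have "n - 1 + (n + 1) = 2 * n"
    using n by simp
  then have "pochhammer (real n) (n + 1) = fact (2 * n) / f"
    using pochhammer_of_nat_eq_fact[OF n, of "n + 1"] unfolding f_def by (simp only:)
  then have B: "pochhammer (real n) (n + 1) = 2 ^ n * (real n * f) * d / f"
    unfolding fact_even_eq_dfact fn d_def .
  have C: "pochhammer (3/2) (n - 1) = (2 * real n - 1) * p"
    using n by (simp add: pochhammer_three_halves p_def of_nat_diff)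
  have D: "real (dfact (2 * n + 1)) = (2 * real n + 1) * d"
    unfolding d_def dfact_odd by (simp add: algebra_simps)
  have E: "(2 ^ n :: real) = 2 * 2 ^ (n - 1)"
    using n by (simp add: power_eq_if)
  show ?thesis
    unfolding weight_pbar_Zp_eq_rational[OF n] Z_const_def A B C D E fn
    using pos n by (simp add: divide_simps) (simp add: algebra_simps flip: power_add)
qed

theorem proposition5p2:
  shows "weight (pbar (alpha 0)) = 1/2 \<and>
    (\<forall>n::nat. n \<ge> 1 \<longrightarrow>
       weight (pbar (alpha n)) = - 3 / (2 ^ (n + 1) * real (dfact (2 * n - 1))) \<and>
       weight (pbar (Zp n)) = - 1 / (2 ^ (n - 1) * real (dfact (2 * n + 1))))"
proof (intro conjI allI impI)
  have "wbarS 1 1 = 1"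
    using wbar_RS_closed_form[of 0 1]
    by (simp add: wbarS_closed_def even_binom_def odd_binom_def binomial_eq_0)
  moreover have "brace 0 1 = 1/2"
    using brace_eq_pochhammer[of 0 1] by simp
  moreover have "{0..0 + 1} = {0, 1::nat}"
    by auto
  ultimately show "weight (pbar (alpha 0)) = 1/2"
    unfolding weight_pbar_alpha_eq_sum by (simp add: wbar_RS_0)
next
  fix n :: nat
  assume "n \<ge> 1"
  then show "weight (pbar (alpha n)) = - 3 / (2 ^ (n + 1) * real (dfact (2 * n - 1)))"
    and "weight (pbar (Zp n)) = - 1 / (2 ^ (n - 1) * real (dfact (2 * n + 1)))"
    by (simp_all add: weight_pbar_alpha weight_pbar_Zp)
qed

end
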